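(* Let $R$ be an associative unital division ring over a field $F$ of characteristic $0$, let $\alpha\in F\setminus\{0\}$, $\lambda,\mu\in F$, and let $N,r,s$ be integers with $N>3$ and $1\leq r<s\leq\lfloor N/2\rfloor$. Let $y_M\in R$ be invertible and $\varphi_M\in R$ for $M\in\mathbb{Z}$, and set $\theta_{l,m,n}=y_{(N-s)l+sm+rn}$, $\psi_{l,m,n}=\varphi_{(N-s)l+sm+rn}$ for $(l,m,n)\in\mathbb{Z}^3$. Let $S=\{(N-s)l+sm+rn:(l,m,n)\in\mathbb{Z}^3\}$. (i) For each $(l,m,n)$, with $M=(N-s)l+sm+rn$, the equation $$\theta_{l+1,m+1,n}=\alpha^2\theta_{l,m,n+1}+\theta_{l+1,m,n}\bigl(\theta_{l,m,n}^{-1}-\alpha^2\theta_{l+1,m+1,n-1}^{-1}\bigr)\theta_{l,m+1,n}$$ holds if and only if $$y_{M+N}=\alpha^2y_{M+r}+y_{M+N-s}\bigl(y_M^{-1}-\alpha^2y_{M+N-r}^{-1}\bigr)y_{M+s}.$$ (ii) If for all $(l,m,n)\in\mathbb{Z}^3$ $$\psi_{l+1,m,n}=\mu\psi_{l,m,n+1}+a_{l,m,n}\psi_{l,m,n},\qquad \lambda\psi_{l,m-1,n+1}=\mu\psi_{l,m,n+1}+b_{l,m,n}\psi_{l,m,n},$$ where $a_{l,m,n}=\alpha^{-1}\theta_{l+1,m,n}\theta_{l,m,n}^{-1}$ and $b_{l,m,n}=\alpha\theta_{l,m-1,n+1}\theta_{l,m,n}^{-1}$, then for all $M\in S$ $$\varphi_{M+N-s}=\mu\varphi_{M+r}+a_M\varphi_M,\qquad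 \lambda\varphi_M=\mu\varphi_{M+s}+b_M\varphi_{M+s-r},$$ with $a_M=\alpha^{-1}y_{M+N-s}y_M^{-1}$ and $b_M=\alpha\,y_My_{M+s-r}^{-1}$. *)

theory Defs
  imports Main
begin

text \<open>R is an algebra over the field F: the structure map F -> R is a unital
ring homomorphism whose image lies in the centre of R.\<close>
definition central_algebra_map :: "('f::field \<Rightarrow> 'r::division_ring) \<Rightarrow> bool" where
  "central_algebra_map e \<longleftrightarrow>
     e 1 = 1 \<and> (\<forall>a b. e (a + b) = e a + e b) \<and> (\<forall>a b. e (a * b) = e a * e b)
     \<and> (\<forall>a x. e a * x = x * e a)"

definition idx :: "int \<Rightarrow> int \<Rightarrow> int \<Rightarrow> int \<Rightarrow> int \<Rightarrow> int \<Rightarrow> int" where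
  "idx N r s l m n = (N - s) * l + s * m + r * n"

end

theory Submission
  imports Defs
begin

(* The map idx is linear, so every lattice shift of (l, m, n) moves M = idx l m n by a fixed
   offset, and each equation on the lattice is the one-dimensional equation at M.  Only the
   second linear equation needs care: its base point is idx l (m-1) (n+1), so it is evaluated at
   (l, m+1, n-1) to be based at M. *)

lemma idx_shift:
  "idx N r s (l + 1) (m + 1) n = idx N r s l m n + N"
  "idx N r s l m (n + 1) = idx N r s l m n + r"
  "idx N r s (l + 1) m n = idx N r s l m n + N - s"
  "idx N r s (l + 1) (m + 1) (n - 1) = idx N r s l m n + N - r"
  "idx N r s l (m + 1) n = idx N r s l m n + s"
  "idx N r s l (m + 1) (n - 1) = idx N r s l m n + s - r"
  by (simp_all add: idx_def algebra_simps)

(* As rewrite rules these overlap (the first and fifth also match the left-hand sides with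
   n - 1), so they are used instantiated at a fixed point (l, m, n). *)

lemma lattice_equation_reduced:
  fixes y :: "int \<Rightarrow> 'r::division_ring" and c :: 'r and N r s l m n :: int
  defines "\<theta> \<equiv> \<lambda>l m n. y (idx N r s l m n)" and "M \<equiv> idx N r s l m n"
  shows "\<theta> (l + 1) (m + 1) n = c * \<theta> l m (n + 1)
           + \<theta> (l + 1) m n * (inverse (\<theta> l m n) - c * inverse (\<theta> (l + 1) (m + 1) (n - 1)))
             * \<theta> l (m + 1) n
    \<longleftrightarrow> y (M + N) = c * y (M + r)
           + y (M + N - s) * (inverse (y M) - c * inverse (y (M + N - r))) * y (M + s)"
  unfolding \<theta>_def M_def idx_shift[of N r s l m n] ..

lemma lattice_linear_system_reduced:
  fixes \<phi> :: "int \<Rightarrow> 'r::ring" and A B :: "int \<Rightarrow> int \<Rightarrow> int \<Rightarrow> 'r" and c d :: 'r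
    and N r s l m n :: int
  assumes first: "\<And>l m n. \<phi> (idx N r s (l + 1) m n)
                     = c * \<phi> (idx N r s l m (n + 1)) + A l m n * \<phi> (idx N r s l m n)"
    and second: "\<And>l m n. d * \<phi> (idx N r s l (m - 1) (n + 1))
                     = c * \<phi> (idx N r s l m (n + 1)) + B l m n * \<phi> (idx N r s l m n)"
  defines "M \<equiv> idx N r s l m n"
  shows "\<phi> (M + N - s) = c * \<phi> (M + r) + A l m n * \<phi> M"
    and "d * \<phi> M = c * \<phi> (M + s) + B l (m + 1) (n - 1) * \<phi> (M + s - r)"
  using first[of l m n] second[of l "m + 1" "n - 1"]
  by (simp_all add: M_def idx_shift[of N r s l m n])

theorem proposition6p1:
  fixes e :: "'f::field_char_0 \<Rightarrow> 'r::division_ring"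
    and \<alpha> lam \<mu> :: 'f
    and N r s :: int
    and y \<phi> :: "int \<Rightarrow> 'r"
  assumes alg: "central_algebra_map e"
    and alpha_nz: "\<alpha> \<noteq> 0"
    and N: "N > 3" and rs: "1 \<le> r" "r < s" "s \<le> N div 2"
    and y_inv: "\<And>M. y M \<noteq> 0"
  defines "\<theta> \<equiv> \<lambda>l m n. y (idx N r s l m n)"
    and "\<psi> \<equiv> \<lambda>l m n. \<phi> (idx N r s l m n)"
    and "S \<equiv> {idx N r s l m n | l m n. True}"
    and "a \<equiv> \<lambda>l m n. e (inverse \<alpha>) * y (idx N r s (l+1) m n) * inverse (y (idx N r s l m n))"
    and "b \<equiv> \<lambda>l m n. e \<alpha> * y (idx N r s l (m-1) (n+1)) * inverse (y (idx N r s l m n))"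
    and "aM \<equiv> \<lambda>M. e (inverse \<alpha>) * y (M+N-s) * inverse (y M)"
    and "bM \<equiv> \<lambda>M. e \<alpha> * y M * inverse (y (M+s-r))"
  shows
    "(\<forall>l m n. let M = idx N r s l m n in
        (\<theta> (l+1) (m+1) n = e (\<alpha>^2) * \<theta> l m (n+1)
            + \<theta> (l+1) m n * (inverse (\<theta> l m n) - e (\<alpha>^2) * inverse (\<theta> (l+1) (m+1) (n-1)))
              * \<theta> l (m+1) n)
        \<longleftrightarrow>
        (y (M+N) = e (\<alpha>^2) * y (M+r)
            + y (M+N-s) * (inverse (y M) - e (\<alpha>^2) * inverse (y (M+N-r))) * y (M+s)))
     \<and>
     ((\<forall>l m n. \<psi> (l+1) m n = e \<mu> * \<psi> l m (n+1) + a l m n * \<psi> l m n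
              \<and> e lam * \<psi> l (m-1) (n+1) = e \<mu> * \<psi> l m (n+1) + b l m n * \<psi> l m n)
      \<longrightarrow> (\<forall>M\<in>S. \<phi> (M+N-s) = e \<mu> * \<phi> (M+r) + aM M * \<phi> M
              \<and> e lam * \<phi> M = e \<mu> * \<phi> (M+s) + bM M * \<phi> (M+s-r)))"
proof -
  let "?equation_reduced \<and> (?lax_pair \<longrightarrow> ?lax_pair_reduced)" = ?thesis
  have ?equation_reduced
    using lattice_equation_reduced[where c = "e (\<alpha>^2)"] unfolding \<theta>_def Let_def by blast
  moreover have ?lax_pair_reduced if lax: ?lax_pair
  proof
    fix M
    assume "M \<in> S"
    then obtain l m n where M: "M = idx N r s l m n"
      unfolding S_def by blast
    from lax have first: "\<And>l m n. \<phi> (idx N r s (l + 1) m n)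
                     = e \<mu> * \<phi> (idx N r s l m (n + 1)) + a l m n * \<phi> (idx N r s l m n)"
      and second: "\<And>l m n. e lam * \<phi> (idx N r s l (m - 1) (n + 1))
                     = e \<mu> * \<phi> (idx N r s l m (n + 1)) + b l m n * \<phi> (idx N r s l m n)"
      unfolding \<psi>_def by blast+
    have "a l m n = aM M" and "b l (m + 1) (n - 1) = bM M"
      by (simp_all add: a_def aM_def b_def bM_def M idx_shift[of N r s l m n])
    then show "\<phi> (M+N-s) = e \<mu> * \<phi> (M+r) + aM M * \<phi> M
               \<and> e lam * \<phi> M = e \<mu> * \<phi> (M+s) + bM M * \<phi> (M+s-r)"
      using lattice_linear_system_reduced[OF first second, where l = l and m = m and n = n]
      unfolding M by simp
  qed
  ultimately show ?thesis
    by blast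
qed

end
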